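(* Let $\gamma_1,\dots,\gamma_r>0$, and let $\mu:[0,\infty)\to\mathbb{R}$ be Lipschitz continuous with $\mu(t)\ge0$ for all $t\ge0$. Let $\varphi(t)$ solve $\dot\varphi=A_\gamma\varphi+B\mu(t)$ and set $\Delta\varphi(t)=\varphi(t)-\Gamma\mu(t)$. Then $\Delta\varphi(\cdot)$ stays bounded on $[0,\infty)$.
   Context: $A_\gamma$ is the $r\times r$ matrix with diagonal entries $-\gamma_1,\dots,-\gamma_r$, entries $1$ on the superdiagonal, and zeros elsewhere; $B=[0,\dots,0,1]^\top\in\mathbb{R}^r$; $\Gamma=-A_\gamma^{-1}B=[(\gamma_1\cdots\gamma_r)^{-1},(\gamma_2\cdots\gamma_r)^{-1},\dots,\gamma_r^{-1}]^\top$. *)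

theory Defs
  imports "HOL-Analysis.Analysis"
begin

text \<open>Vectors in R^r are represented as functions nat => real, with components
indexed 0,...,r-1 (index i here corresponds to index i+1 in the paper).\<close>

definition A_gamma :: "nat \<Rightarrow> (nat \<Rightarrow> real) \<Rightarrow> nat \<Rightarrow> nat \<Rightarrow> real" where
  "A_gamma r \<gamma> i j = (if i = j then - \<gamma> i else if j = Suc i then 1 else 0)"

definition B_vec :: "nat \<Rightarrow> nat \<Rightarrow> real" where
  "B_vec r i = (if i = r - 1 then 1 else 0)"

definition Gamma_vec :: "nat \<Rightarrow> (nat \<Rightarrow> real) \<Rightarrow> nat \<Rightarrow> real" where
  "Gamma_vec r \<gamma> i = 1 / (\<Prod>j\<in>{i..<r}. \<gamma> j)"

end

theory Submission
  imports Defs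
begin

text \<open>Component i of \<open>\<Delta>\<phi>\<close> obeys a scalar equation \<open>x' = -\<gamma> x + g + h\<close> with
\<open>g = \<Gamma>\<^sub>i\<^sub>+\<^sub>1 \<mu>\<close> Lipschitz and \<open>h\<close> the bounded error of component i+1 (for the
last component, \<open>h = 0\<close>). For such an equation \<open>u = x - g / \<gamma>\<close> decreases
immediately to the right of every time at which it exceeds \<open>(H + L / \<gamma>) / \<gamma>\<close>, because
there the derivative of x plus the Lipschitz rate of \<open>g / \<gamma>\<close> is negative; so u can never
climb above that level or its initial value. Applying this to \<open>-x\<close> gives the lower
bound, and a downward induction over the components finishes the proof.\<close>

lemma eventually_at_right_less_lipschitz_perturbation:
  fixes f g :: "real \<Rightarrow> real"
  assumes f': "(f has_real_derivative D) (at t within {t..})"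
    and lip: "L-lipschitz_on {t..} g"
    and neg: "D + L < 0"
  shows "\<forall>\<^sub>F s in at_right t. f s + g s < f t + g t"
proof -
  \<comment> \<open>\<open>f s + L s\<close> strictly decreases near t, and \<open>g\<close> grows by at most \<open>L (s - t)\<close>.\<close>
  have "((\<lambda>s. f s + L * s) has_real_derivative D + L) (at t within {t..})"
    using f' by (auto intro!: derivative_eq_intros)
  then obtain d where "d > 0"
    and dec: "\<And>h. 0 < h \<Longrightarrow> h < d \<Longrightarrow> f (t + h) + L * (t + h) < f t + L * t"
    using has_real_derivative_neg_dec_right[OF _ neg] by force
  have "f s + g s < f t + g t" if "t < s" "s < t + d" for s
  proof -
    have "g s - g t \<le> L * (s - t)"
      using lipschitz_onD[OF lip, of s t] that by (simp add: dist_real_def)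
    moreover have "f s + L * s < f t + L * t"
      using dec[of "s - t"] that by simp
    ultimately show ?thesis by (simp add: algebra_simps)
  qed
  then show ?thesis
    unfolding eventually_at_right_field using \<open>d > 0\<close> by (intro exI[of _ "t + d"]) auto
qed

lemma le_if_right_descent_above:
  fixes u :: "real \<Rightarrow> real"
  assumes cont: "continuous_on {a..} u"
    and descent: "\<And>t. t \<ge> a \<Longrightarrow> u t > c \<Longrightarrow> \<forall>\<^sub>F s in at_right t. u s < u t"
    and start: "u a \<le> K" and "c < K" and "a \<le> T"
  shows "u T \<le> K"
proof (rule ccontr)
  assume "\<not> u T \<le> K"
  define S where "S = {a..T} \<inter> u -` {..K}"
  have "closed S"
    unfolding S_def by (intro continuous_closed_preimage continuous_on_subset[OF cont]) auto
  moreover have "a \<in> S" "bdd_above S"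
    using start \<open>a \<le> T\<close> unfolding S_def by (auto intro: bdd_aboveI[of _ T])
  ultimately have "Sup S \<in> S"
    by (intro closed_contains_Sup) auto
  define s where "s = Sup S"
  have s: "a \<le> s" "s \<le> T" "u s \<le> K"
    using \<open>Sup S \<in> S\<close> unfolding s_def S_def by auto
  with \<open>\<not> u T \<le> K\<close> have "s < T"
    by (cases "s = T") auto
  have above: "u y > K" if "s < y" "y \<le> T" for y
  proof (rule ccontr)
    assume "\<not> u y > K"
    with that s have "y \<in> S" unfolding S_def by auto
    then have "y \<le> s" unfolding s_def using \<open>bdd_above S\<close> by (rule cSup_upper)
    with that show False by simp
  qed
  have "\<forall>\<^sub>F y in at_right s. u y \<le> K"
  proof (cases "u s < K")
    case True
    have "(u \<longlongrightarrow> u s) (at_right s)"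
      using cont s(1) by (auto simp: continuous_on_def intro: tendsto_within_subset)
    then have "\<forall>\<^sub>F y in at_right s. u y < K"
      using True by (rule order_tendstoD)
    then show ?thesis by eventually_elim simp
  next
    case False
    with s(3) \<open>c < K\<close> have "u s = K" "u s > c" by auto
    with descent[OF s(1)] show ?thesis
      by (auto elim: eventually_mono)
  qed
  moreover have "\<forall>\<^sub>F y in at_right s. s < y \<and> y \<le> T"
    using \<open>s < T\<close> unfolding eventually_at_right_field by (intro exI[of _ T]) auto
  ultimately have "\<forall>\<^sub>F y in at_right s. False"
    by eventually_elim (use above in force)
  then show False by simp
qed

lemma linear_ode_lipschitz_forcing_upper_bound:
  fixes x g h :: "real \<Rightarrow> real" and \<gamma> L H :: real
  assumes "\<gamma> > 0"
    and lip: "L-lipschitz_on {0..} g"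
    and h_le: "\<And>t. t \<ge> 0 \<Longrightarrow> h t \<le> H"
    and x': "\<And>t. t \<ge> 0 \<Longrightarrow>
      (x has_real_derivative - \<gamma> * x t + g t + h t) (at t within {0..})"
  shows "\<exists>C. \<forall>t\<ge>0. x t - g t / \<gamma> \<le> C"
proof -
  define u where "u t = x t - g t / \<gamma>" for t
  define c where "c = (H + L / \<gamma>) / \<gamma>"
  have lip_quot: "(L / \<gamma>)-lipschitz_on {0..} (\<lambda>t. - g t / \<gamma>)"
    using lipschitz_on_cmult_real[OF lip, of "- 1 / \<gamma>"] \<open>\<gamma> > 0\<close> by simp
  have "continuous_on {0..} x"
    using x' by (auto simp: continuous_on_eq_continuous_within intro: DERIV_continuous)
  then have cont: "continuous_on {0..} u"
    unfolding u_def using lipschitz_on_continuous_on[OF lip] \<open>\<gamma> > 0\<close>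
    by (intro continuous_intros) auto
  have descent: "\<forall>\<^sub>F s in at_right t. u s < u t" if "t \<ge> 0" "u t > c" for t
  proof -
    have "\<gamma> * u t > H + L / \<gamma>"
      using \<open>u t > c\<close> \<open>\<gamma> > 0\<close> unfolding c_def by (simp add: field_simps)
    moreover have "- \<gamma> * x t + g t = - \<gamma> * u t"
      unfolding u_def using \<open>\<gamma> > 0\<close> by (simp add: field_simps)
    ultimately have neg: "- \<gamma> * x t + g t + h t + L / \<gamma> < 0"
      using h_le[OF \<open>t \<ge> 0\<close>] by linarith
    have "(x has_real_derivative - \<gamma> * x t + g t + h t) (at t within {t..})"
      using x'[OF \<open>t \<ge> 0\<close>] by (rule has_field_derivative_subset) (use that in auto)
    moreover have "(L / \<gamma>)-lipschitz_on {t..} (\<lambda>t. - g t / \<gamma>)"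
      using lip_quot by (rule lipschitz_on_subset) (use that in auto)
    ultimately have "\<forall>\<^sub>F s in at_right t. x s + - g s / \<gamma> < x t + - g t / \<gamma>"
      by (rule eventually_at_right_less_lipschitz_perturbation[OF _ _ neg])
    then show ?thesis
      unfolding u_def by simp
  qed
  have "u t \<le> max (u 0) (c + 1)" if "t \<ge> 0" for t
    using le_if_right_descent_above[OF cont descent] that by simp
  then show ?thesis
    unfolding u_def by blast
qed

lemma linear_ode_lipschitz_forcing_bounded:
  fixes x g h :: "real \<Rightarrow> real" and \<gamma> L H :: real
  assumes "\<gamma> > 0"
    and lip: "L-lipschitz_on {0..} g"
    and h_bounded: "\<And>t. t \<ge> 0 \<Longrightarrow> \<bar>h t\<bar> \<le> H"
    and x': "\<And>t. t \<ge> 0 \<Longrightarrow>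
      (x has_real_derivative - \<gamma> * x t + g t + h t) (at t within {0..})"
  shows "\<exists>C. \<forall>t\<ge>0. \<bar>x t - g t / \<gamma>\<bar> \<le> C"
proof -
  obtain C1 where C1: "\<forall>t\<ge>0. x t - g t / \<gamma> \<le> C1"
    using linear_ode_lipschitz_forcing_upper_bound[OF \<open>\<gamma> > 0\<close> lip, of h H x] h_bounded x'
    by (meson abs_le_D1)
  have "((\<lambda>t. - x t) has_real_derivative - \<gamma> * (- x t) + (- g t) + (- h t)) (at t within {0..})"
    if "t \<ge> 0" for t
    using DERIV_minus[OF x'[OF that]] by simp
  then obtain C2 where C2: "\<forall>t\<ge>0. - x t - (- g t) / \<gamma> \<le> C2"
    using linear_ode_lipschitz_forcing_upper_bound[OF \<open>\<gamma> > 0\<close> lipschitz_on_minus[OF lip],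
        of "\<lambda>t. - h t" H "\<lambda>t. - x t"] h_bounded
    by (meson abs_le_D2)
  show ?thesis
    using C1 C2 by (intro exI[of _ "max C1 C2"]) (auto simp: abs_le_iff)
qed

lemma linear_stage_tracking_error_bounded:
  fixes x y \<mu> :: "real \<Rightarrow> real" and \<gamma> G L H :: real
  assumes "\<gamma> > 0"
    and lip: "L-lipschitz_on {0..} \<mu>"
    and y_tracks: "\<forall>t\<in>{0..}. \<bar>y t - G * \<mu> t\<bar> \<le> H"
    and x': "\<And>t. t \<ge> 0 \<Longrightarrow> (x has_real_derivative - \<gamma> * x t + y t) (at t within {0..})"
  shows "\<exists>C. \<forall>t\<in>{0..}. \<bar>x t - G / \<gamma> * \<mu> t\<bar> \<le> C"
proof -
  define g where "g t = G * \<mu> t" for t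
  have "(\<bar>G\<bar> * L)-lipschitz_on {0..} g"
    unfolding g_def by (rule lipschitz_on_cmult_real[OF lip])
  moreover have "\<bar>y t - g t\<bar> \<le> H" if "t \<ge> 0" for t
    using y_tracks that unfolding g_def by simp
  moreover have "(x has_real_derivative - \<gamma> * x t + g t + (y t - g t)) (at t within {0..})"
    if "t \<ge> 0" for t
    using x'[OF that] by simp
  ultimately have "\<exists>C. \<forall>t\<ge>0. \<bar>x t - g t / \<gamma>\<bar> \<le> C"
    by (rule linear_ode_lipschitz_forcing_bounded[OF \<open>\<gamma> > 0\<close>])
  then show ?thesis
    unfolding g_def by fastforce
qed

lemma A_gamma_row:
  assumes "i < r"
  shows "(\<Sum>j<r. A_gamma r \<gamma> i j * v j) + B_vec r i * m
    = - \<gamma> i * v i + (if Suc i < r then v (Suc i) else m)"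
proof -
  have "(\<Sum>j<r. A_gamma r \<gamma> i j * v j)
      = (\<Sum>j<r. (if j = i then - \<gamma> i * v j else 0) + (if j = Suc i then v j else 0))"
    by (rule sum.cong) (auto simp: A_gamma_def)
  also have "\<dots> = - \<gamma> i * v i + (if Suc i < r then v (Suc i) else 0)"
    using assms by (simp add: sum.distrib)
  finally show ?thesis
    using assms by (auto simp: B_vec_def)
qed

lemma Gamma_vec_Suc:
  assumes "i < r"
  shows "Gamma_vec r \<gamma> i = Gamma_vec r \<gamma> (Suc i) / \<gamma> i"
  using assms by (simp add: Gamma_vec_def prod.atLeast_Suc_lessThan)

lemma Gamma_vec_last: "Gamma_vec r \<gamma> r = 1"
  by (simp add: Gamma_vec_def)

lemma finite_family_uniform_upper_bound:
  fixes f :: "'i \<Rightarrow> 'a \<Rightarrow> real"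
  assumes "finite I"
    and bounded: "\<And>i. i \<in> I \<Longrightarrow> \<exists>C. \<forall>t\<in>S. f i t \<le> C"
  shows "\<exists>C. \<forall>t\<in>S. \<forall>i\<in>I. f i t \<le> C"
proof -
  obtain C where C: "\<And>i t. i \<in> I \<Longrightarrow> t \<in> S \<Longrightarrow> f i t \<le> C i"
    using bounded by metis
  have "C i \<le> (\<Sum>j\<in>I. \<bar>C j\<bar>)" if "i \<in> I" for i
    using member_le_sum[OF that _ \<open>finite I\<close>, of "\<lambda>j. \<bar>C j\<bar>"] by simp
  with C show ?thesis
    by (meson order_trans)
qed

theorem lemma1:
  fixes r :: nat and \<gamma> :: "nat \<Rightarrow> real" and \<mu> :: "real \<Rightarrow> real"
    and \<phi> :: "real \<Rightarrow> nat \<Rightarrow> real"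
  assumes gpos: "\<And>i. i < r \<Longrightarrow> \<gamma> i > 0"
    and lip: "\<exists>L. L-lipschitz_on {0..} \<mu>"
    and nonneg: "\<And>t. t \<ge> 0 \<Longrightarrow> \<mu> t \<ge> 0"
    and ode: "\<And>t i. t \<ge> 0 \<Longrightarrow> i < r \<Longrightarrow>
      ((\<lambda>s. \<phi> s i) has_real_derivative
         ((\<Sum>j<r. A_gamma r \<gamma> i j * \<phi> t j) + B_vec r i * \<mu> t)) (at t within {0..})"
  shows "\<exists>C. \<forall>t\<ge>0. \<forall>i<r. \<bar>\<phi> t i - Gamma_vec r \<gamma> i * \<mu> t\<bar> \<le> C"
proof -
  obtain L where lip_\<mu>: "L-lipschitz_on {0..} \<mu>"
    using lip by blast
  \<comment> \<open>Appending \<open>\<mu>\<close> as component r, whose error vanishes since \<open>\<Gamma>\<^sub>r = 1\<close>, starts the induction.\<close>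
  define \<psi> where "\<psi> t i = (if i < r then \<phi> t i else \<mu> t)" for t i
  have \<psi>_bounded: "\<exists>C. \<forall>t\<in>{0..}. \<bar>\<psi> t i - Gamma_vec r \<gamma> i * \<mu> t\<bar> \<le> C"
    if "i \<le> r" for i
    using that
  proof (induction rule: inc_induct)
    case base
    show ?case
      by (auto simp: \<psi>_def Gamma_vec_last)
  next
    case (step i)
    then obtain H where H: "\<forall>t\<in>{0..}. \<bar>\<psi> t (Suc i) - Gamma_vec r \<gamma> (Suc i) * \<mu> t\<bar> \<le> H"
      by blast
    have "((\<lambda>s. \<phi> s i) has_real_derivative - \<gamma> i * \<phi> t i + \<psi> t (Suc i)) (at t within {0..})"
      if "t \<ge> 0" for t
      using ode[OF that \<open>i < r\<close>] A_gamma_row[OF \<open>i < r\<close>] by (simp add: \<psi>_def)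
    with H have "\<exists>C. \<forall>t\<in>{0..}. \<bar>\<phi> t i - Gamma_vec r \<gamma> (Suc i) / \<gamma> i * \<mu> t\<bar> \<le> C"
      by (intro linear_stage_tracking_error_bounded[OF gpos[OF \<open>i < r\<close>] lip_\<mu>])
    then show ?case
      using \<open>i < r\<close> by (simp add: \<psi>_def Gamma_vec_Suc)
  qed
  have "\<exists>C. \<forall>t\<in>{0..}. \<bar>\<phi> t i - Gamma_vec r \<gamma> i * \<mu> t\<bar> \<le> C" if "i \<in> {..<r}" for i
    using \<psi>_bounded[of i] that by (simp add: \<psi>_def)
  then show ?thesis
    using finite_family_uniform_upper_bound[where I = "{..<r}" and S = "{0..}"
        and f = "\<lambda>i t. \<bar>\<phi> t i - Gamma_vec r \<gamma> i * \<mu> t\<bar>"]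
    by fastforce
qed

end
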